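(* Let $\Gamma=\langle V,(w_u)_{u\in V},\alpha,\beta\rangle$ be a star celebrity game with $\beta>1$ and $n=|V|$, and let $G$ be a Nash equilibrium graph of $\Gamma$. If there is $v\in V$ with $\max_{x\in V}d_G(v,x)\le\beta-1$, then $$W(G,\beta)=\sum_{u\in V}\ \sum_{x:\,d_G(u,x)>\beta}w_x\ \le\ \alpha(n-1).$$
   Context: A celebrity game $\Gamma=\langle V,(w_u)_{u\in V},\alpha,\beta\rangle$ consists of a set of players $V=\{1,\dots,n\}$, celebrity weights $w_u>0$, a link cost $\alpha>0$ and a critical distance $\beta$ with $1\le\beta\le n-1$. A strategy of player $u$ is a set $S_u\subseteq V\setminus\{u\}$; a strategy profile is $S=(S_1,\dots,S_n)$; its outcome graph $G[S]$ is the undirected graph on $V$ with edge set $\{\{u,v\}: u\in S_v\text{ or }v\in S_u\}$. With $d_G$ the graph distance (infinite between different connected components), the cost of player $u$ is $c_u(S)=\alpha|S_u|+\sum_{v:\,d_{G[S]}(u,v)>\beta}w_v$. $S$ is a Nash equilibrium if no player can strictly decrease its cost by changing only its own strategy; a graph $G$ is a Nash equilibrium graph if $G=G[S]$ for some Nash equilibrium $S$. $\Gamma$ is a star celebrity game if it has a Nash equilibrium graph that is connected. *)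

theory Defs
  imports Main "HOL-Library.Extended_Nat"
begin

text \<open>Players are V = {1..n}. A strategy profile is S :: nat => nat set, where S u is the
  set of players u buys links to. A graph on V is given by an adjacency relation.\<close>

definition players :: "nat \<Rightarrow> nat set" where
  "players n = {1..n}"

definition valid_profile :: "nat \<Rightarrow> (nat \<Rightarrow> nat set) \<Rightarrow> bool" where
  "valid_profile n S \<longleftrightarrow> (\<forall>u\<in>players n. S u \<subseteq> players n - {u})"

definition outcome :: "nat \<Rightarrow> (nat \<Rightarrow> nat set) \<Rightarrow> nat \<Rightarrow> nat \<Rightarrow> bool" where
  "outcome n S = (\<lambda>u v. u \<in> players n \<and> v \<in> players n \<and> (u \<in> S v \<or> v \<in> S u))"

text \<open>A walk of length k from u to v: list of k+1 vertices with consecutive ones adjacent.\<close>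
definition walk :: "(nat \<Rightarrow> nat \<Rightarrow> bool) \<Rightarrow> nat list \<Rightarrow> nat \<Rightarrow> nat \<Rightarrow> bool" where
  "walk G p u v \<longleftrightarrow> p \<noteq> [] \<and> hd p = u \<and> last p = v \<and>
     (\<forall>i. Suc i < length p \<longrightarrow> G (p ! i) (p ! Suc i))"

text \<open>Graph distance (infinite if no walk exists), restricted to vertices of V.\<close>
definition gdist :: "nat \<Rightarrow> (nat \<Rightarrow> nat \<Rightarrow> bool) \<Rightarrow> nat \<Rightarrow> nat \<Rightarrow> enat" where
  "gdist n G u v = (INF k \<in> {k. \<exists>p. walk G p u v \<and> length p = Suc k \<and> set p \<subseteq> players n}. enat k)"

definition cost :: "nat \<Rightarrow> (nat \<Rightarrow> real) \<Rightarrow> real \<Rightarrow> nat \<Rightarrow> (nat \<Rightarrow> nat set) \<Rightarrow> nat \<Rightarrow> real" where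
  "cost n w \<alpha> \<beta> S u = \<alpha> * real (card (S u)) +
     (\<Sum>v\<in>{v\<in>players n. gdist n (outcome n S) u v > enat \<beta>}. w v)"

definition celebrity_game :: "nat \<Rightarrow> (nat \<Rightarrow> real) \<Rightarrow> real \<Rightarrow> nat \<Rightarrow> bool" where
  "celebrity_game n w \<alpha> \<beta> \<longleftrightarrow> (\<forall>u\<in>players n. w u > 0) \<and> \<alpha> > 0 \<and> 1 \<le> \<beta> \<and> \<beta> + 1 \<le> n"

definition nash_eq :: "nat \<Rightarrow> (nat \<Rightarrow> real) \<Rightarrow> real \<Rightarrow> nat \<Rightarrow> (nat \<Rightarrow> nat set) \<Rightarrow> bool" where
  "nash_eq n w \<alpha> \<beta> S \<longleftrightarrow> valid_profile n S \<and>
     (\<forall>u\<in>players n. \<forall>T. T \<subseteq> players n - {u} \<longrightarrow> cost n w \<alpha> \<beta> S u \<le> cost n w \<alpha> \<beta> (S(u := T)) u)"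

definition nash_graph :: "nat \<Rightarrow> (nat \<Rightarrow> real) \<Rightarrow> real \<Rightarrow> nat \<Rightarrow> (nat \<Rightarrow> nat \<Rightarrow> bool) \<Rightarrow> bool" where
  "nash_graph n w \<alpha> \<beta> G \<longleftrightarrow> (\<exists>S. nash_eq n w \<alpha> \<beta> S \<and> G = outcome n S)"

definition graph_connected :: "nat \<Rightarrow> (nat \<Rightarrow> nat \<Rightarrow> bool) \<Rightarrow> bool" where
  "graph_connected n G \<longleftrightarrow> (\<forall>u\<in>players n. \<forall>v\<in>players n. gdist n G u v < \<infinity>)"

definition star_celebrity_game :: "nat \<Rightarrow> (nat \<Rightarrow> real) \<Rightarrow> real \<Rightarrow> nat \<Rightarrow> bool" where
  "star_celebrity_game n w \<alpha> \<beta> \<longleftrightarrow> celebrity_game n w \<alpha> \<beta> \<and>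
     (\<exists>G. nash_graph n w \<alpha> \<beta> G \<and> graph_connected n G)"

definition W :: "nat \<Rightarrow> (nat \<Rightarrow> real) \<Rightarrow> (nat \<Rightarrow> nat \<Rightarrow> bool) \<Rightarrow> nat \<Rightarrow> real" where
  "W n w G \<beta> = (\<Sum>u\<in>players n. \<Sum>x\<in>{x\<in>players n. gdist n G u x > enat \<beta>}. w x)"

end

theory Submission
  imports Defs
begin

text \<open>If some player v is within distance \<beta> - 1 of everybody, then any other player u can
  reach everybody within \<beta> by buying the single extra link uv. In a Nash equilibrium this
  deviation does not pay off, so the weight u fails to reach is at most the link cost \<alpha>,
  while v itself reaches everybody. Summing over the n - 1 players u \<noteq> v gives the bound.\<close>

definition far_weight :: "nat \<Rightarrow> (nat \<Rightarrow> real) \<Rightarrow> (nat \<Rightarrow> nat \<Rightarrow> bool) \<Rightarrow> nat \<Rightarrow> nat \<Rightarrow> real" where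
  "far_weight n w G \<beta> u = (\<Sum>x\<in>{x\<in>players n. gdist n G u x > enat \<beta>}. w x)"

lemma W_eq_sum_far_weight: "W n w G \<beta> = (\<Sum>u\<in>players n. far_weight n w G \<beta> u)"
  by (simp add: W_def far_weight_def)

lemma cost_eq_far_weight:
  "cost n w \<alpha> \<beta> S u = \<alpha> * real (card (S u)) + far_weight n w (outcome n S) \<beta> u"
  by (simp add: cost_def far_weight_def)

lemma far_weight_eq_0:
  assumes "\<forall>x\<in>players n. gdist n G u x \<le> enat \<beta>"
  shows "far_weight n w G \<beta> u = 0"
proof -
  have "{x\<in>players n. gdist n G u x > enat \<beta>} = {}"
    using assms by (auto simp: not_less)
  then show ?thesis unfolding far_weight_def by (metis sum.empty)
qed

lemma gdist_le_walk:
  assumes "walk G p u x" "length p = Suc k" "set p \<subseteq> players n"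
  shows "gdist n G u x \<le> enat k"
  unfolding gdist_def by (rule INF_lower) (use assms in blast)

lemma gdist_le_enatE:
  assumes "gdist n G u x \<le> enat m"
  obtains k p where "walk G p u x" "length p = Suc k" "set p \<subseteq> players n" "k \<le> m"
proof (rule ccontr)
  assume no_walk: "\<not> thesis"
  have "enat (Suc m) \<le> gdist n G u x"
    unfolding gdist_def
  proof (rule INF_greatest)
    fix k assume "k \<in> {k. \<exists>p. walk G p u x \<and> length p = Suc k \<and> set p \<subseteq> players n}"
    with no_walk that have "\<not> k \<le> m" by blast
    then show "enat (Suc m) \<le> enat k" by simp
  qed
  from order_trans[OF this assms] show False by simp
qed

lemma walk_mono:
  assumes "walk G p a b" "\<And>x y. G x y \<Longrightarrow> G' x y"
  shows "walk G' p a b"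
  using assms unfolding walk_def by blast

lemma walk_Cons:
  assumes "walk G p a b" "G u a"
  shows "walk G (u # p) u b"
  unfolding walk_def
proof (intro conjI allI impI)
  fix i assume "Suc i < length (u # p)"
  then show "G ((u # p) ! i) ((u # p) ! Suc i)"
    using assms unfolding walk_def by (cases i) (auto simp: hd_conv_nth)
qed (use assms in \<open>auto simp: walk_def\<close>)

lemma gdist_mono:
  assumes "\<And>a b. G a b \<Longrightarrow> G' a b"
  shows "gdist n G' u x \<le> gdist n G u x"
  unfolding gdist_def
  by (rule INF_superset_mono) (use walk_mono[of G _ u x G'] assms in auto)

lemma gdist_le_Suc_neighbour:
  assumes "G u a" "u \<in> players n" "gdist n G a x \<le> enat m"
  shows "gdist n G u x \<le> enat (Suc m)"
proof -
  obtain k p where p: "walk G p a x" "length p = Suc k" "set p \<subseteq> players n" "k \<le> m"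
    using assms(3) by (rule gdist_le_enatE)
  have "gdist n G u x \<le> enat (Suc k)"
    by (rule gdist_le_walk[OF walk_Cons[OF p(1) assms(1)]]) (use p assms(2) in auto)
  also have "\<dots> \<le> enat (Suc m)" using p(4) by simp
  finally show ?thesis .
qed

lemma nash_eq_cost_le:
  assumes "nash_eq n w \<alpha> \<beta> S" "u \<in> players n" "T \<subseteq> players n - {u}"
  shows "cost n w \<alpha> \<beta> S u \<le> cost n w \<alpha> \<beta> (S(u := T)) u"
  using assms unfolding nash_eq_def by blast

lemma nash_eq_far_weight_le_link_cost:
  assumes NE: "nash_eq n w \<alpha> \<beta> S" and "0 \<le> \<alpha>" and "1 \<le> \<beta>"
    and u: "u \<in> players n" "u \<noteq> v" and v: "v \<in> players n"
    and centre: "\<forall>x\<in>players n. gdist n (outcome n S) v x \<le> enat (\<beta> - 1)"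
  shows "far_weight n w (outcome n S) \<beta> u \<le> \<alpha>"
proof -
  have valid: "S u \<subseteq> players n - {u}"
    using NE u(1) by (simp add: nash_eq_def valid_profile_def)
  define S' where "S' = S(u := insert v (S u))"
  have "insert v (S u) \<subseteq> players n - {u}" using valid u v by blast
  then have "cost n w \<alpha> \<beta> S u \<le> cost n w \<alpha> \<beta> S' u"
    unfolding S'_def by (rule nash_eq_cost_le[OF NE u(1)])
  moreover have "far_weight n w (outcome n S') \<beta> u = 0"
  proof (rule far_weight_eq_0, rule ballI)
    fix x assume "x \<in> players n"
    have uv: "outcome n S' u v" using u v by (simp add: outcome_def S'_def)
    have "gdist n (outcome n S') v x \<le> gdist n (outcome n S) v x"
      by (rule gdist_mono) (auto simp: outcome_def S'_def)
    also have "\<dots> \<le> enat (\<beta> - 1)" using centre \<open>x \<in> players n\<close> by blast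
    finally have "gdist n (outcome n S') u x \<le> enat (Suc (\<beta> - 1))"
      by (rule gdist_le_Suc_neighbour[where G = "outcome n S'", OF uv u(1)])
    then show "gdist n (outcome n S') u x \<le> enat \<beta>" using \<open>1 \<le> \<beta>\<close> by simp
  qed
  moreover have "card (S' u) \<le> card (S u) + 1"
    using finite_subset[OF valid] by (simp add: S'_def card_insert_if players_def)
  then have "\<alpha> * real (card (S' u)) \<le> \<alpha> * (real (card (S u)) + 1)"
    using \<open>0 \<le> \<alpha>\<close> by (intro mult_left_mono) simp_all
  ultimately show ?thesis by (simp add: cost_eq_far_weight algebra_simps)
qed

theorem lemma3:
  fixes n \<beta> :: nat and w :: "nat \<Rightarrow> real" and \<alpha> :: real
    and G :: "nat \<Rightarrow> nat \<Rightarrow> bool" and v :: nat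
  assumes "star_celebrity_game n w \<alpha> \<beta>"
    and "\<beta> > 1"
    and "nash_graph n w \<alpha> \<beta> G"
    and "v \<in> players n"
    and "\<forall>x\<in>players n. gdist n G v x \<le> enat (\<beta> - 1)"
  shows "W n w G \<beta> \<le> \<alpha> * (real n - 1)"
proof -
  obtain S where NE: "nash_eq n w \<alpha> \<beta> S" and G: "G = outcome n S"
    using assms(3) unfolding nash_graph_def by blast
  have "\<alpha> > 0" using assms(1) by (simp add: star_celebrity_game_def celebrity_game_def)
  have fin: "finite (players n)" by (simp add: players_def)
  have "W n w G \<beta> = far_weight n w G \<beta> v + (\<Sum>u\<in>players n - {v}. far_weight n w G \<beta> u)"
    using fin assms(4) by (simp add: W_eq_sum_far_weight sum.remove)
  also have "\<dots> \<le> 0 + (\<Sum>u\<in>players n - {v}. \<alpha>)"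
  proof (intro add_mono sum_mono)
    show "far_weight n w G \<beta> v \<le> 0"
      using assms(5) by (subst far_weight_eq_0) (auto elim!: order.trans)
    show "far_weight n w G \<beta> u \<le> \<alpha>" if "u \<in> players n - {v}" for u
      using nash_eq_far_weight_le_link_cost[OF NE] that assms \<open>\<alpha> > 0\<close> G by auto
  qed
  also have "\<dots> = \<alpha> * (real n - 1)"
    using assms(4) by (simp add: players_def of_nat_diff)
  finally show ?thesis .
qed

end
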